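(* Let $\alpha\in(\pi/8,3\pi/8)$ with $\alpha/\pi\notin\mathbb{Q}$, $\beta=\alpha-\pi/2$, $\rho=0.01$, $A_1=\rho R(\alpha)$, $A_2=\rho R(\beta)$ where $R(\theta)=\begin{bmatrix}\cos\theta&-\sin\theta\\ \sin\theta&\cos\theta\end{bmatrix}$, and $c(x)=x_1^2+2x_2^2$ on $\mathbb{R}^2$. Let $J^\star$ be the optimal value function, $\tilde J^\star(\theta)=J^\star([\cos\theta,\sin\theta]^\top)$, $\Delta\tilde J^\star(\theta)=\tilde J^\star(\theta+\alpha)-\tilde J^\star(\theta+\beta)$, $\mu=\pi/4-\alpha$, $\delta=0.01$, and let $\nu\in(\mu-\delta,\mu+\delta)$ satisfy $\Delta\tilde J^\star(\nu)=0$. Let $I=[\nu+\beta,\nu+\alpha)$ and $T:I\to I$ be defined by $T(\theta)=\theta+\alpha$ if $\theta<\nu$ and $T(\theta)=\theta+\beta$ if $\theta\geq\nu$. Then for every $\theta\in I$, the backward orbit $\{T^{-1}\theta,T^{-2}\theta,T^{-3}\theta,\ldots\}$ is dense in $I$.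
   Context: $T$ is a bijection of $I$ (an interval exchange map), so $T^{-k}$ is well defined. For the switched linear system $\xi(t+1)=A_{\sigma(t)}\xi(t)$ with $\sigma:\mathbb{N}\to\{1,2\}$, $J^\star(x)=\inf_\sigma\sum_{t=0}^\infty c(\xi(t,x,\sigma))$ where $\xi(t,x,\sigma)$ is the solution with $\xi(0)=x$. *)

theory Defs
  imports "HOL-Analysis.Analysis"
begin

definition rot :: "real \<Rightarrow> real^2^2" where
  "rot \<theta> = vector [vector [cos \<theta>, - sin \<theta>], vector [sin \<theta>, cos \<theta>]]"

primrec traj :: "(nat \<Rightarrow> real^2^2) \<Rightarrow> (nat \<Rightarrow> nat) \<Rightarrow> real^2 \<Rightarrow> nat \<Rightarrow> real^2" where
  "traj A \<sigma> x 0 = x"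
| "traj A \<sigma> x (Suc t) = A (\<sigma> t) *v traj A \<sigma> x t"

definition Jstar :: "(nat \<Rightarrow> real^2^2) \<Rightarrow> (real^2 \<Rightarrow> real) \<Rightarrow> real^2 \<Rightarrow> ereal" where
  "Jstar A c x = (INF \<sigma> \<in> {\<sigma>. \<forall>t. \<sigma> t \<in> {1,2}}. (\<Sum>t. ereal (c (traj A \<sigma> x t))))"

end

theory Submission
  imports Defs
begin

text \<open>Identifying \<open>I\<close> with the circle \<open>\<real>/(\<pi>/2)\<int>\<close>, the map \<open>T\<close> is the rotation by \<open>\<alpha>\<close>,
  so \<open>T\<^sup>-\<^sup>k \<theta>\<close> is the representative in \<open>I\<close> of \<open>\<theta> - k\<alpha>\<close>. As \<open>\<alpha>/(\<pi>/2)\<close> is irrational, Kronecker's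
  theorem makes these points dense.\<close>

definition rotate_interval :: "real \<Rightarrow> real \<Rightarrow> real \<Rightarrow> real \<Rightarrow> real" where
  "rotate_interval a L \<alpha> x = (if x < a + L - \<alpha> then x + \<alpha> else x + \<alpha> - L)"

lemma congruent_in_interval_eq:
  fixes p q a L :: real and m :: int
  assumes "p \<in> {a..<a+L}" "q \<in> {a..<a+L}" "p = q + of_int m * L"
  shows "p = q"
proof -
  have "\<bar>of_int m * L\<bar> < L" "L > 0" using assms by auto
  then have "\<bar>of_int m\<bar> < (1::real)" by (simp add: abs_mult)
  then have "m = 0" by linarith
  then show ?thesis using assms(3) by simp
qed

lemma inj_on_rotate_interval: "inj_on (rotate_interval a L \<alpha>) {a..<a+L}"
  by (rule inj_onI) (auto simp: rotate_interval_def split: if_splits)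

lemma inv_into_rotate_interval:
  assumes "0 \<le> \<alpha>" "\<alpha> \<le> L" "y \<in> {a..<a+L}"
  obtains m :: int
  where "inv_into {a..<a+L} (rotate_interval a L \<alpha>) y \<in> {a..<a+L}"
    and "inv_into {a..<a+L} (rotate_interval a L \<alpha>) y = y - \<alpha> + of_int m * L"
proof -
  define m :: int where "m = (if a \<le> y - \<alpha> then 0 else 1)"
  define z where "z = y - \<alpha> + of_int m * L"
  have "z \<in> {a..<a+L}" "rotate_interval a L \<alpha> z = y"
    using assms unfolding z_def m_def by (auto simp: rotate_interval_def)
  then show thesis
    using that[of m] inv_into_f_eq[OF inj_on_rotate_interval] unfolding z_def by metis
qed

lemma iterate_congruent_shift:
  fixes S :: "real \<Rightarrow> real"
  assumes step: "\<And>y. y \<in> I \<Longrightarrow> S y \<in> I \<and> (\<exists>m::int. S y = y - \<alpha> + of_int m * L)"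
    and "x \<in> I"
  shows "(S ^^ k) x \<in> I \<and> (\<exists>m::int. (S ^^ k) x = x - real k * \<alpha> + of_int m * L)"
proof (induction k)
  case 0
  show ?case using \<open>x \<in> I\<close> by (auto intro: exI[of _ 0])
next
  case (Suc k)
  then obtain m where m: "(S ^^ k) x \<in> I" "(S ^^ k) x = x - real k * \<alpha> + of_int m * L"
    by blast
  then obtain m' where m': "S ((S ^^ k) x) \<in> I" "S ((S ^^ k) x) = (S ^^ k) x - \<alpha> + of_int m' * L"
    using step by blast
  have "(S ^^ Suc k) x = x - real (Suc k) * \<alpha> + of_int (m + m') * L"
    using m m' by (simp add: algebra_simps)
  moreover have "(S ^^ Suc k) x \<in> I" using m' by simp
  ultimately show ?case by blast
qed

lemma irrational_shift_orbit_dense: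
  fixes f :: "nat \<Rightarrow> real"
  assumes "L > 0" "\<alpha> / L \<notin> \<rat>"
    and in_I: "\<And>k. f k \<in> {a..<a+L}"
    and congruent: "\<And>k. \<exists>m::int. f k = x - real k * \<alpha> + of_int m * L"
  shows "{a..<a+L} \<subseteq> closure {f k | k. k \<ge> 1}"
proof (intro subsetI, unfold closure_approachable, intro allI impI)
  fix t e :: real
  assume t: "t \<in> {a..<a+L}" and "e > 0"
  define s where "s = min e (a + L - t) / 2"
  have s: "s > 0" "s \<le> e / 2" "t + 2 * s \<le> a + L"
    using \<open>e > 0\<close> t unfolding s_def by auto
  \<comment> \<open>aim at \<open>t + s\<close> rather than \<open>t\<close>, so that the approximation stays inside \<open>I\<close>\<close>
  obtain h k :: int where k: "k > 0"
    and approx: "\<bar>of_int k * (\<alpha> / L) - of_int h - (x - (t + s)) / L\<bar> < s / L"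
    using sequence_of_fractional_parts_is_dense[OF assms(2), of "s / L"] s(1) \<open>L > 0\<close>
    by (metis divide_pos_pos)
  define p where "p = x - of_int k * \<alpha> + of_int h * L"
  have "of_int k * (\<alpha> / L) - of_int h - (x - (t + s)) / L = (t + s - p) / L"
    using \<open>L > 0\<close> unfolding p_def by (simp add: field_simps)
  then have p: "\<bar>p - (t + s)\<bar> < s"
    using approx \<open>L > 0\<close> by (simp add: abs_minus_commute divide_less_cancel)
  then have "p \<in> {a..<a+L}" using s t by auto
  obtain m :: int where m: "f (nat k) = x - real (nat k) * \<alpha> + of_int m * L"
    using congruent by blast
  have "p = f (nat k) + of_int (h - m) * L"
    unfolding p_def m using k by (simp add: algebra_simps)
  then have "p = f (nat k)"
    using congruent_in_interval_eq[OF \<open>p \<in> _\<close> in_I] by blast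
  moreover have "dist p t < e" using p s by (simp add: dist_real_def)
  moreover have "nat k \<ge> 1" using k by simp
  ultimately show "\<exists>y\<in>{f k |k. 1 \<le> k}. dist y t < e" by blast
qed

theorem lemma9:
  fixes \<alpha> \<beta> \<rho> \<mu> \<delta> \<nu> :: real
    and A :: "nat \<Rightarrow> real^2^2"
    and c :: "real^2 \<Rightarrow> real"
    and Jt :: "real \<Rightarrow> ereal"
    and T :: "real \<Rightarrow> real"
    and I :: "real set"
  assumes "pi / 8 < \<alpha>" "\<alpha> < 3 * pi / 8"
    and "\<alpha> / pi \<notin> \<rat>"
    and "\<beta> = \<alpha> - pi / 2"
    and "\<rho> = 0.01"
    and "A 1 = \<rho> *\<^sub>R rot \<alpha>" "A 2 = \<rho> *\<^sub>R rot \<beta>"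
    and "\<And>x. c x = (x $ 1)\<^sup>2 + 2 * (x $ 2)\<^sup>2"
    and "\<And>\<theta>. Jt \<theta> = Jstar A c (vector [cos \<theta>, sin \<theta>])"
    and "\<mu> = pi / 4 - \<alpha>"
    and "\<delta> = 0.01"
    and "\<mu> - \<delta> < \<nu>" "\<nu> < \<mu> + \<delta>"
    and "Jt (\<nu> + \<alpha>) - Jt (\<nu> + \<beta>) = 0"
    and "I = {\<nu> + \<beta> ..< \<nu> + \<alpha>}"
    and "\<And>\<theta>. T \<theta> = (if \<theta> < \<nu> then \<theta> + \<alpha> else \<theta> + \<beta>)"
  shows "\<forall>\<theta>\<in>I. I \<subseteq> closure {((inv_into I T) ^^ k) \<theta> | k. k \<ge> 1}"
proof
  define L where "L = pi / 2"
  define a where "a = \<nu> + \<beta>"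
  have I: "I = {a..<a+L}" using assms(4,15) unfolding a_def L_def by simp
  have T: "T = rotate_interval a L \<alpha>"
    using assms(4,16) unfolding a_def L_def rotate_interval_def by (auto simp: algebra_simps)
  have "L > 0" "0 \<le> \<alpha>" "\<alpha> \<le> L" using assms(1,2) pi_gt_zero unfolding L_def by linarith+
  have "\<alpha> / L \<notin> \<rat>"
  proof
    assume "\<alpha> / L \<in> \<rat>"
    then have "\<alpha> / L / 2 \<in> \<rat>" by (rule Rats_divide) simp
    moreover have "\<alpha> / L / 2 = \<alpha> / pi" unfolding L_def by simp
    ultimately show False using assms(3) by metis
  qed
  fix \<theta> assume "\<theta> \<in> I"
  have "((inv_into I T) ^^ k) \<theta> \<in> I \<and> (\<exists>m::int. ((inv_into I T) ^^ k) \<theta> = \<theta> - real k * \<alpha> + of_int m * L)"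
    for k
    using iterate_congruent_shift inv_into_rotate_interval[OF \<open>0 \<le> \<alpha>\<close> \<open>\<alpha> \<le> L\<close>] \<open>\<theta> \<in> I\<close>
    unfolding I T by metis
  then show "I \<subseteq> closure {((inv_into I T) ^^ k) \<theta> | k. k \<ge> 1}"
    using irrational_shift_orbit_dense[OF \<open>L > 0\<close> \<open>\<alpha> / L \<notin> \<rat>\<close>, where f = "\<lambda>k. ((inv_into I T) ^^ k) \<theta>"]
    unfolding I by blast
qed

end
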